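(* Let a hyperbolic triangle have $e^a,e^b,e^c\in\mathbb{Q}$. Then $\cos\alpha,\cos\beta,\cos\gamma\in\mathbb{Q}$, and there is $r\in\mathbb{Q}$ with $\sin(A)=r\,\Delta_2$, where $\Delta_2=\sin(\alpha)\sinh(b)\sinh(c)=\sin(\beta)\sinh(a)\sinh(c)=\sin(\gamma)\sinh(a)\sinh(b)$. Moreover the following are equivalent: (i) $\Delta_2\in\mathbb{Q}$; (ii) $\sin\alpha,\sin\beta,\sin\gamma\in\mathbb{Q}$; (iii) $\sin A\in\mathbb{Q}$ (and then the triangle is a hyperbolic Heron triangle).
   Context: All triangles are non-degenerate, bounded triangles in the hyperbolic plane (curvature $-1$), with side lengths $a,b,c>0$, opposite angles $\alpha,\beta,\gamma>0$, and area $A=\pi-\alpha-\beta-\gamma$. A hyperbolic Heron triangle is one with $e^a,e^b,e^c\in\mathbb{Q}$ and $\cos,\sin$ of $\alpha,\beta,\gamma,A$ all rational. *)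

theory Defs
  imports Complex_Main
begin

text \<open>A bounded, non-degenerate triangle in the hyperbolic plane (curvature -1),
  described by its side lengths a b c and opposite angles al be ga.
  Such a triangle is characterised (up to isometry) by the hyperbolic law of cosines;
  conversely any data satisfying these relations with angles in (0,pi) is realised by
  a genuine hyperbolic triangle.\<close>
definition hyp_triangle :: "real \<Rightarrow> real \<Rightarrow> real \<Rightarrow> real \<Rightarrow> real \<Rightarrow> real \<Rightarrow> bool" where
  "hyp_triangle a b c al be ga \<longleftrightarrow>
     0 < a \<and> 0 < b \<and> 0 < c \<and>
     0 < al \<and> al < pi \<and> 0 < be \<and> be < pi \<and> 0 < ga \<and> ga < pi \<and>
     cosh a = cosh b * cosh c - sinh b * sinh c * cos al \<and>
     cosh b = cosh a * cosh c - sinh a * sinh c * cos be \<and>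
     cosh c = cosh a * cosh b - sinh a * sinh b * cos ga"

definition hyp_area :: "real \<Rightarrow> real \<Rightarrow> real \<Rightarrow> real" where
  "hyp_area al be ga = pi - al - be - ga"

definition hyp_heron :: "real \<Rightarrow> real \<Rightarrow> real \<Rightarrow> real \<Rightarrow> real \<Rightarrow> real \<Rightarrow> bool" where
  "hyp_heron a b c al be ga \<longleftrightarrow>
     hyp_triangle a b c al be ga \<and>
     exp a \<in> \<rat> \<and> exp b \<in> \<rat> \<and> exp c \<in> \<rat> \<and>
     cos al \<in> \<rat> \<and> sin al \<in> \<rat> \<and> cos be \<in> \<rat> \<and> sin be \<in> \<rat> \<and>
     cos ga \<in> \<rat> \<and> sin ga \<in> \<rat> \<and>
     cos (hyp_area al be ga) \<in> \<rat> \<and> sin (hyp_area al be ga) \<in> \<rat>"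

end

theory Submission
  imports Defs
begin

text \<open>Write \<open>x, y, z\<close> for \<open>cosh a, cosh b, cosh c\<close>. These and \<open>sinh a, sinh b, sinh c\<close> are
  rational when \<open>e\<^sup>a, e\<^sup>b, e\<^sup>c\<close> are, so the law of cosines makes the cosines of the angles
  rational. Each of \<open>sin \<alpha> sinh b sinh c\<close>, \<open>sin \<beta> sinh c sinh a\<close>, \<open>sin \<gamma> sinh a sinh b\<close> is
  positive and squares to \<open>1 + 2xyz - x\<^sup>2 - y\<^sup>2 - z\<^sup>2\<close>, so they all equal one number \<open>\<Delta>\<^sub>2\<close>.
  Since \<open>sin A = sin (\<alpha> + \<beta> + \<gamma>)\<close>, expanding and clearing denominators with the law of
  cosines gives \<open>sin A (sinh a sinh b sinh c)\<^sup>2 = \<Delta>\<^sub>2 (x - 1)(y - 1)(z - 1)(1 + x + y + z)\<close>,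
  so \<open>sin A\<close> is a nonzero rational multiple of \<open>\<Delta>\<^sub>2\<close>, and \<open>\<Delta>\<^sub>2\<close> is a nonzero rational
  multiple of each sine.\<close>

lemma Rats_cosh: "exp (t::real) \<in> \<rat> \<Longrightarrow> cosh t \<in> \<rat>"
  by (simp add: cosh_field_def exp_minus)

lemma Rats_sinh: "exp (t::real) \<in> \<rat> \<Longrightarrow> sinh t \<in> \<rat>"
  by (simp add: sinh_field_def exp_minus)

lemma cosh_real_gt_1: "(t::real) \<noteq> 0 \<Longrightarrow> 1 < cosh t"
  using cosh_real_ge_1[of t] cosh_real_one_iff[of t] by linarith

definition unit_gram_det :: "real \<Rightarrow> real \<Rightarrow> real \<Rightarrow> real" where
  "unit_gram_det x y z = 1 + 2 * x * y * z - x\<^sup>2 - y\<^sup>2 - z\<^sup>2"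

lemma unit_gram_det_rotate: "unit_gram_det y z x = unit_gram_det x y z"
  unfolding unit_gram_det_def by (simp add: algebra_simps)

lemma hyp_triangle_rotate:
  "hyp_triangle a b c al be ga \<Longrightarrow> hyp_triangle b c a be ga al"
  unfolding hyp_triangle_def mult.commute[of "cosh c" "cosh a"] mult.commute[of "sinh c" "sinh a"]
    mult.commute[of "cosh b" "cosh a"] mult.commute[of "sinh b" "sinh a"]
  by blast

lemma hyp_triangle_cos_mult:
  assumes "hyp_triangle a b c al be ga"
  shows "cos al * (sinh b * sinh c) = cosh b * cosh c - cosh a"
  using assms unfolding hyp_triangle_def by (simp add: algebra_simps)

lemma hyp_triangle_cos_Rats:
  assumes tri: "hyp_triangle a b c al be ga"
    and "exp a \<in> \<rat>" "exp b \<in> \<rat>" "exp c \<in> \<rat>"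
  shows "cos al \<in> \<rat>"
proof -
  have "sinh b * sinh c \<noteq> 0"
    using tri unfolding hyp_triangle_def by simp
  then have "cos al = cos al * (sinh b * sinh c) / (sinh b * sinh c)"
    by (rule nonzero_mult_div_cancel_right[symmetric])
  then have "cos al = (cosh b * cosh c - cosh a) / (sinh b * sinh c)"
    unfolding hyp_triangle_cos_mult[OF tri] .
  then show ?thesis
    using assms by (simp add: Rats_cosh Rats_sinh)
qed

lemma hyp_triangle_sin_prod_square:
  assumes tri: "hyp_triangle a b c al be ga"
  shows "(sin al * sinh b * sinh c)\<^sup>2 = unit_gram_det (cosh a) (cosh b) (cosh c)"
proof -
  have "(sin al * sinh b * sinh c)\<^sup>2 = (1 - (cos al)\<^sup>2) * (sinh b)\<^sup>2 * (sinh c)\<^sup>2"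
    by (simp add: sin_squared_eq power_mult_distrib)
  also have "\<dots> = unit_gram_det (cosh a) (cosh b) (cosh c)"
    using hyp_triangle_cos_mult[OF tri] sinh_square_eq[of b] sinh_square_eq[of c]
    unfolding unit_gram_det_def by algebra
  finally show ?thesis .
qed

lemma hyp_triangle_sin_prod_pos:
  assumes "hyp_triangle a b c al be ga"
  shows "0 < sin al * sinh b * sinh c"
  using assms unfolding hyp_triangle_def by (simp add: sin_gt_zero)

lemma hyp_triangle_law_of_sines:
  assumes tri: "hyp_triangle a b c al be ga"
  shows "sin al * sinh b * sinh c = sin be * sinh c * sinh a"
    and "sin al * sinh b * sinh c = sin ga * sinh a * sinh b"
proof -
  have tri': "hyp_triangle b c a be ga al"
    using hyp_triangle_rotate[OF tri] .
  have tri'': "hyp_triangle c a b ga al be"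
    using hyp_triangle_rotate[OF tri'] .
  show "sin al * sinh b * sinh c = sin be * sinh c * sinh a"
    using hyp_triangle_sin_prod_square[OF tri] hyp_triangle_sin_prod_square[OF tri']
      hyp_triangle_sin_prod_pos[OF tri] hyp_triangle_sin_prod_pos[OF tri']
    by (simp add: unit_gram_det_rotate power2_eq_imp_eq)
  show "sin al * sinh b * sinh c = sin ga * sinh a * sinh b"
    using hyp_triangle_sin_prod_square[OF tri] hyp_triangle_sin_prod_square[OF tri'']
      hyp_triangle_sin_prod_pos[OF tri] hyp_triangle_sin_prod_pos[OF tri'']
    by (simp add: unit_gram_det_rotate power2_eq_imp_eq)
qed

lemma sin_hyp_area:
  "sin (hyp_area al be ga) =
     sin al * cos be * cos ga + cos al * sin be * cos ga + cos al * cos be * sin ga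
       - sin al * sin be * sin ga"
  unfolding hyp_area_def diff_diff_eq by (simp add: sin_add cos_add algebra_simps)

lemma cos_hyp_area_Rats:
  assumes "cos al \<in> \<rat>" "sin al \<in> \<rat>" "cos be \<in> \<rat>" "sin be \<in> \<rat>" "cos ga \<in> \<rat>" "sin ga \<in> \<rat>"
  shows "cos (hyp_area al be ga) \<in> \<rat>"
  using assms unfolding hyp_area_def diff_diff_eq by (simp add: sin_add cos_add)

lemma hyp_triangle_sin_area:
  assumes tri: "hyp_triangle a b c al be ga"
  shows "sin (hyp_area al be ga) * (sinh a * sinh b * sinh c)\<^sup>2 =
    (sin al * sinh b * sinh c) *
      ((cosh a - 1) * (cosh b - 1) * (cosh c - 1) * (1 + cosh a + cosh b + cosh c))"
proof -
  have tri': "hyp_triangle b c a be ga al"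
    using hyp_triangle_rotate[OF tri] .
  have tri'': "hyp_triangle c a b ga al be"
    using hyp_triangle_rotate[OF tri'] .
  define D where "D = sin al * sinh b * sinh c"
  note law = hyp_triangle_cos_mult[OF tri] hyp_triangle_cos_mult[OF tri'] hyp_triangle_cos_mult[OF tri'']
  note sines = hyp_triangle_law_of_sines[OF tri, folded D_def]
  have "sin (hyp_area al be ga) * (sinh a * sinh b * sinh c)\<^sup>2 =
      (sin al * sinh b * sinh c) * (cos be * (sinh c * sinh a)) * (cos ga * (sinh a * sinh b))
      + (cos al * (sinh b * sinh c)) * (sin be * sinh c * sinh a) * (cos ga * (sinh a * sinh b))
      + (cos al * (sinh b * sinh c)) * (cos be * (sinh c * sinh a)) * (sin ga * sinh a * sinh b)
      - (sin al * sinh b * sinh c) * (sin be * sinh c * sinh a) * (sin ga * sinh a * sinh b)"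
    unfolding sin_hyp_area by (simp add: algebra_simps power2_eq_square)
  also have "\<dots> = D * ((cosh c * cosh a - cosh b) * (cosh a * cosh b - cosh c)
      + (cosh b * cosh c - cosh a) * (cosh a * cosh b - cosh c)
      + (cosh b * cosh c - cosh a) * (cosh c * cosh a - cosh b) - D\<^sup>2)"
    unfolding law D_def[symmetric] sines[symmetric] by algebra
  also have "\<dots> = D * ((cosh a - 1) * (cosh b - 1) * (cosh c - 1) * (1 + cosh a + cosh b + cosh c))"
    unfolding D_def hyp_triangle_sin_prod_square[OF tri] unit_gram_det_def by algebra
  finally show ?thesis
    unfolding D_def .
qed

lemma hyp_triangle_sin_area_ratio:
  assumes tri: "hyp_triangle a b c al be ga"
    and "exp a \<in> \<rat>" "exp b \<in> \<rat>" "exp c \<in> \<rat>"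
  obtains r where "r \<in> \<rat>" "r \<noteq> 0" "sin (hyp_area al be ga) = r * (sin al * sinh b * sinh c)"
proof
  define r where "r = (cosh a - 1) * (cosh b - 1) * (cosh c - 1) * (1 + cosh a + cosh b + cosh c)
    / (sinh a * sinh b * sinh c)\<^sup>2"
  have pos: "0 < a" "0 < b" "0 < c"
    using tri unfolding hyp_triangle_def by auto
  then have "1 < cosh a" "1 < cosh b" "1 < cosh c"
    by (simp_all add: cosh_real_gt_1)
  moreover have "0 < sinh a * sinh b * sinh c"
    using pos by simp
  ultimately show "r \<noteq> 0"
    using pos unfolding r_def by simp
  show "r \<in> \<rat>"
    using assms unfolding r_def by (simp add: Rats_cosh Rats_sinh)
  have "r * (sin al * sinh b * sinh c) =
      sin (hyp_area al be ga) * (sinh a * sinh b * sinh c)\<^sup>2 / (sinh a * sinh b * sinh c)\<^sup>2"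
    unfolding r_def hyp_triangle_sin_area[OF tri] by simp
  also have "\<dots> = sin (hyp_area al be ga)"
    by (rule nonzero_mult_div_cancel_right) (use pos in simp)
  finally show "sin (hyp_area al be ga) = r * (sin al * sinh b * sinh c)"
    by simp
qed

theorem mainTheorem7:
  fixes a b c al be ga :: real
  assumes tri: "hyp_triangle a b c al be ga"
    and ea: "exp a \<in> \<rat>" and eb: "exp b \<in> \<rat>" and ec: "exp c \<in> \<rat>"
  defines "D2 \<equiv> sin al * sinh b * sinh c"
  shows "cos al \<in> \<rat> \<and> cos be \<in> \<rat> \<and> cos ga \<in> \<rat>
    \<and> D2 = sin be * sinh a * sinh c \<and> D2 = sin ga * sinh a * sinh b
    \<and> (\<exists>r\<in>\<rat>. sin (hyp_area al be ga) = r * D2)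
    \<and> (D2 \<in> \<rat> \<longleftrightarrow> (sin al \<in> \<rat> \<and> sin be \<in> \<rat> \<and> sin ga \<in> \<rat>))
    \<and> ((sin al \<in> \<rat> \<and> sin be \<in> \<rat> \<and> sin ga \<in> \<rat>) \<longleftrightarrow> sin (hyp_area al be ga) \<in> \<rat>)
    \<and> (sin (hyp_area al be ga) \<in> \<rat> \<longrightarrow> hyp_heron a b c al be ga)"
proof -
  have tri': "hyp_triangle b c a be ga al" and tri'': "hyp_triangle c a b ga al be"
    using hyp_triangle_rotate tri by blast+
  have cos: "cos al \<in> \<rat>" "cos be \<in> \<rat>" "cos ga \<in> \<rat>"
    using hyp_triangle_cos_Rats tri tri' tri'' ea eb ec by blast+
  have sines: "D2 = sin be * sinh a * sinh c" "D2 = sin ga * sinh a * sinh b"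
    using hyp_triangle_law_of_sines[OF tri] unfolding D2_def by (simp_all add: ac_simps)
  obtain r where r: "r \<in> \<rat>" "r \<noteq> 0" "sin (hyp_area al be ga) = r * D2"
    using hyp_triangle_sin_area_ratio[OF tri ea eb ec] unfolding D2_def by blast
  have sinh: "sinh a \<in> \<rat> - {0}" "sinh b \<in> \<rat> - {0}" "sinh c \<in> \<rat> - {0}"
    using tri ea eb ec unfolding hyp_triangle_def by (simp_all add: Rats_sinh)
  have "D2 \<in> \<rat> \<longleftrightarrow> sin al \<in> \<rat>"
    using sinh unfolding D2_def by (simp add: Rats_mult_iff)
  moreover have "D2 \<in> \<rat> \<longleftrightarrow> sin be \<in> \<rat>"
    using sinh unfolding sines(1) by (simp add: Rats_mult_iff)
  moreover have "D2 \<in> \<rat> \<longleftrightarrow> sin ga \<in> \<rat>"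
    using sinh unfolding sines(2) by (simp add: Rats_mult_iff)
  ultimately have sin_iff: "D2 \<in> \<rat> \<longleftrightarrow> sin al \<in> \<rat> \<and> sin be \<in> \<rat> \<and> sin ga \<in> \<rat>"
    by blast
  have area_iff: "sin (hyp_area al be ga) \<in> \<rat> \<longleftrightarrow> D2 \<in> \<rat>"
    using r by (simp add: Rats_mult_iff)
  have "hyp_heron a b c al be ga" if "sin (hyp_area al be ga) \<in> \<rat>"
    using that tri ea eb ec cos area_iff sin_iff cos_hyp_area_Rats unfolding hyp_heron_def by blast
  then show ?thesis
    using cos sines r sin_iff area_iff by blast
qed

end
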